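(* Let $r,s$ be positive integers, let $Q\subseteq [r]\times[s]$, and let $\phi_Q:\mathbb{K}[z_{jk} : (j,k)\in Q]\to \mathbb{K}[x_j,y_k : j\in[r],k\in[s]]$ be the ring homomorphism $z_{jk}\mapsto x_jy_k$, with kernel $I_Q=\ker(\phi_Q)$. Let $m=x_{j_1}x_{j_2}\cdots x_{j_d}$ be a monomial in $\mathbb{K}[x,y]$. Then \[ \phi_Q^{-1}(\langle m\rangle)=\langle z_{j_1k_1}z_{j_2k_2}\cdots z_{j_dk_d} : k_1,\dots,k_d\in[s],\ (j_\ell,k_\ell)\in Q \text{ for all } \ell\rangle + I_Q. \] Similarly, if $n=y_{k_1}y_{k_2}\cdots y_{k_d}$ is a monomial in $\mathbb{K}[x,y]$, then \[ \phi_Q^{-1}(\langle n\rangle)=\langle z_{j_1k_1}z_{j_2k_2}\cdots z_{j_dk_d} : j_1,\dots,j_d\in[r],\ (j_\ell,k_\ell)\in Q \text{ for all } \ell\rangle + I_Q. \]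
   Context: $\mathbb{K}$ is a field and $[r]=\{1,\dots,r\}$. Here $\langle m\rangle$ denotes the ideal of $\mathbb{K}[x,y]$ generated by $m$, and $\phi_Q^{-1}$ denotes the preimage (contraction) of an ideal under $\phi_Q$. *)

theory Defs
  imports "HOL-Library.Poly_Mapping"
begin

text \<open>Multivariate polynomials over a field with variables of type 'v,
  represented as finitely supported maps from monomials (exponent vectors)
  to coefficients; multiplication is the convolution product.\<close>

type_synonym ('v, 'k) mpoly = "('v \<Rightarrow>\<^sub>0 nat) \<Rightarrow>\<^sub>0 'k"

definition mvars :: "('v, 'k::zero) mpoly \<Rightarrow> 'v set" where
  "mvars p = \<Union> (Poly_Mapping.keys ` Poly_Mapping.keys p)"

definition polys_in :: "'v set \<Rightarrow> ('v, 'k::zero) mpoly set" where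
  "polys_in V = {p. mvars p \<subseteq> V}"

definition mconst :: "'k \<Rightarrow> ('v, 'k::zero) mpoly" where
  "mconst c = Poly_Mapping.single 0 c"

definition mvar :: "'v \<Rightarrow> ('v, 'k::{zero,one}) mpoly" where
  "mvar v = Poly_Mapping.single (Poly_Mapping.single v 1) 1"

definition msubst :: "('v \<Rightarrow> ('w, 'k::comm_ring_1) mpoly) \<Rightarrow> ('v, 'k) mpoly \<Rightarrow> ('w, 'k) mpoly" where
  "msubst \<sigma> p = sum (\<lambda>m. mconst (Poly_Mapping.lookup p m) * prod (\<lambda>v. \<sigma> v ^ Poly_Mapping.lookup m v) (Poly_Mapping.keys m)) (Poly_Mapping.keys p)"

definition ideal_gen :: "'a::comm_ring_1 set \<Rightarrow> 'a set \<Rightarrow> 'a set" where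
  "ideal_gen S G = {\<Sum>g\<in>F. c g * g | F c. finite F \<and> F \<subseteq> G \<and> (\<forall>g\<in>F. c g \<in> S)}"

definition set_plus_ideal :: "'a::plus set \<Rightarrow> 'a set \<Rightarrow> 'a set" where
  "set_plus_ideal I J = {a + b | a b. a \<in> I \<and> b \<in> J}"

text \<open>Variables of K[x,y]: Inl j is x_j, Inr k is y_k.\<close>
definition xy_vars :: "nat \<Rightarrow> nat \<Rightarrow> (nat + nat) set" where
  "xy_vars r s = Inl ` {1..r} \<union> Inr ` {1..s}"

definition phiQ :: "(nat \<times> nat, 'k::comm_ring_1) mpoly \<Rightarrow> (nat + nat, 'k) mpoly" where
  "phiQ = msubst (\<lambda>(j,k). mvar (Inl j) * mvar (Inr k))"

definition IQ :: "(nat \<times> nat) set \<Rightarrow> (nat \<times> nat, 'k::comm_ring_1) mpoly set" where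
  "IQ Q = {p \<in> polys_in Q. phiQ p = 0}"

definition phiQ_preimage :: "(nat \<times> nat) set \<Rightarrow> (nat + nat, 'k::comm_ring_1) mpoly set
    \<Rightarrow> (nat \<times> nat, 'k) mpoly set" where
  "phiQ_preimage Q J = {p \<in> polys_in Q. phiQ p \<in> J}"

end

theory Submission
  imports Defs
begin

text \<open>
  The substitution phi_Q is a monomial map: it sends the monomial z^a to x^(fst_* a) y^(snd_* a),
  where fst_* a and snd_* a are the pushforwards of the exponent vector a along the two
  projections. For any monomial map, the preimage of a principal monomial ideal (x^mu) is
  generated, modulo the kernel, by the monomials z^a with x^mu dividing their image: split a
  preimage p into the terms z^a whose image is divisible by x^mu and the remainder q; then
  phi(q) is divisible by x^mu, being a difference of two such polynomials, while none of its
  terms is, so phi(q) = 0. Finally, x_j1 ... x_jd divides phi_Q(z^a) iff the multiset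
  {j1, ..., jd} is contained in fst_* a, i.e. iff z^a is divisible by some z_j1k1 ... z_jdkd
  with all (jl, kl) in Q; symmetrically for monomials in the y variables.
\<close>

section \<open>Exponent vectors\<close>

lemma poly_mapping_sum_single:
  "p = (\<Sum>a\<in>Poly_Mapping.keys p. Poly_Mapping.single a (Poly_Mapping.lookup p a))"
  by (rule poly_mapping_eqI)
     (simp add: lookup_sum lookup_single when_def in_keys_iff sum.delta' flip: sum.inter_filter)

lemma keys_sum_single_subset: "Poly_Mapping.keys (\<Sum>a\<in>A. Poly_Mapping.single a (f a)) \<subseteq> A"
  using keys_sum[of "\<lambda>a. Poly_Mapping.single a (f a)" A] by auto

lemma poly_mapping_sum_single_filter:
  "p = (\<Sum>a\<in>{a \<in> Poly_Mapping.keys p. P a}. Poly_Mapping.single a (Poly_Mapping.lookup p a))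
     + (\<Sum>a\<in>{a \<in> Poly_Mapping.keys p. \<not> P a}. Poly_Mapping.single a (Poly_Mapping.lookup p a))"
proof -
  have "(\<Sum>a\<in>{a \<in> Poly_Mapping.keys p. P a}. Poly_Mapping.single a (Poly_Mapping.lookup p a))
      + (\<Sum>a\<in>{a \<in> Poly_Mapping.keys p. \<not> P a}. Poly_Mapping.single a (Poly_Mapping.lookup p a))
    = (\<Sum>a\<in>{a \<in> Poly_Mapping.keys p. P a} \<union> {a \<in> Poly_Mapping.keys p. \<not> P a}.
        Poly_Mapping.single a (Poly_Mapping.lookup p a))"
    by (rule sum.union_disjoint[symmetric]) auto
  also have "{a \<in> Poly_Mapping.keys p. P a} \<union> {a \<in> Poly_Mapping.keys p. \<not> P a} = Poly_Mapping.keys p"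
    by auto
  finally show ?thesis
    by (simp flip: poly_mapping_sum_single)
qed

lemma lookup_le_diff_add:
  fixes a b :: "'v \<Rightarrow>\<^sub>0 nat"
  shows "Poly_Mapping.lookup a \<le> Poly_Mapping.lookup b \<Longrightarrow> (b - a) + a = b"
  by (rule poly_mapping_eqI) (simp add: lookup_add lookup_minus le_fun_def)

lemma keys_diff_subset:
  fixes a b :: "'v \<Rightarrow>\<^sub>0 nat"
  shows "Poly_Mapping.keys (a - b) \<subseteq> Poly_Mapping.keys a"
  by (auto simp: in_keys_iff lookup_minus)

definition pushforward ::
    "('a \<Rightarrow> 'b) \<Rightarrow> ('a \<Rightarrow>\<^sub>0 'c::comm_monoid_add) \<Rightarrow> ('b \<Rightarrow>\<^sub>0 'c)" where
  "pushforward g a = (\<Sum>x\<in>Poly_Mapping.keys a. Poly_Mapping.single (g x) (Poly_Mapping.lookup a x))"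

lemma pushforward_superset:
  assumes "finite S" "Poly_Mapping.keys a \<subseteq> S"
  shows "pushforward g a = (\<Sum>x\<in>S. Poly_Mapping.single (g x) (Poly_Mapping.lookup a x))"
  unfolding pushforward_def
  by (rule sum.mono_neutral_left) (use assms in \<open>auto simp: in_keys_iff\<close>)

lemma pushforward_add: "pushforward g (a + b) = pushforward g a + pushforward g b"
  by (simp add: pushforward_superset[of "Poly_Mapping.keys a \<union> Poly_Mapping.keys b"] keys_add
      lookup_add single_add sum.distrib)

lemma pushforward_single [simp]: "pushforward g (Poly_Mapping.single x c) = Poly_Mapping.single (g x) c"
  by (simp add: pushforward_def)

lemma pushforward_0 [simp]: "pushforward g 0 = 0"
  by (simp add: pushforward_def)

lemma keys_pushforward_subset: "Poly_Mapping.keys (pushforward g a) \<subseteq> g ` Poly_Mapping.keys a"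
  unfolding pushforward_def by (rule order_trans[OF keys_sum]) auto

lemma lookup_pushforward:
  "Poly_Mapping.lookup (pushforward g a) y
    = (\<Sum>x\<in>Poly_Mapping.keys a. if g x = y then Poly_Mapping.lookup a x else 0)"
  by (simp add: pushforward_def lookup_sum lookup_single when_def eq_commute)

lemma lookup_pushforward_comp_inj:
  "inj g \<Longrightarrow> Poly_Mapping.lookup (pushforward (g \<circ> f) a) (g y) = Poly_Mapping.lookup (pushforward f a) y"
  by (simp add: lookup_pushforward inj_eq)

lemma lookup_pushforward_notin_range:
  "z \<notin> range g \<Longrightarrow> Poly_Mapping.lookup (pushforward g a) z = 0"
  by (auto simp: lookup_pushforward intro!: sum.neutral)

lemma pushforward_id [simp]: "pushforward id a = a"
  by (simp add: pushforward_def flip: poly_mapping_sum_single)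

lemma lookup_le_pushforward_iff:
  fixes b :: "'b \<Rightarrow>\<^sub>0 'c::canonically_ordered_monoid_add"
  assumes "inj g" "range g \<inter> range h = {}"
  shows "Poly_Mapping.lookup (pushforward g b)
      \<le> Poly_Mapping.lookup (pushforward (g \<circ> f) a + pushforward (h \<circ> f') c)
    \<longleftrightarrow> Poly_Mapping.lookup b \<le> Poly_Mapping.lookup (pushforward f a)"
proof -
  have at_g: "Poly_Mapping.lookup (pushforward g b) (g y) = Poly_Mapping.lookup b y" for y
    using lookup_pushforward_comp_inj[OF assms(1), of id] by simp
  have "g y \<notin> range (h \<circ> f')" for y
    using assms(2) by auto
  then have rhs_at_g: "Poly_Mapping.lookup (pushforward (g \<circ> f) a + pushforward (h \<circ> f') c) (g y)
      = Poly_Mapping.lookup (pushforward f a) y" for y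
    by (simp add: lookup_add lookup_pushforward_comp_inj[OF assms(1)] lookup_pushforward_notin_range)
  have off_g: "Poly_Mapping.lookup (pushforward g b) z = 0" if "z \<notin> range g" for z
    using that by (rule lookup_pushforward_notin_range)
  show ?thesis
  proof
    assume le: "Poly_Mapping.lookup (pushforward g b)
      \<le> Poly_Mapping.lookup (pushforward (g \<circ> f) a + pushforward (h \<circ> f') c)"
    show "Poly_Mapping.lookup b \<le> Poly_Mapping.lookup (pushforward f a)"
    proof (rule le_funI)
      fix y
      show "Poly_Mapping.lookup b y \<le> Poly_Mapping.lookup (pushforward f a) y"
        using le_funD[OF le, of "g y"] by (simp add: at_g rhs_at_g)
    qed
  next
    assume le: "Poly_Mapping.lookup b \<le> Poly_Mapping.lookup (pushforward f a)"
    show "Poly_Mapping.lookup (pushforward g b)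
      \<le> Poly_Mapping.lookup (pushforward (g \<circ> f) a + pushforward (h \<circ> f') c)"
    proof (rule le_funI)
      fix z
      show "Poly_Mapping.lookup (pushforward g b) z
        \<le> Poly_Mapping.lookup (pushforward (g \<circ> f) a + pushforward (h \<circ> f') c) z"
      proof (cases "z \<in> range g")
        case True
        then obtain y where "z = g y" by blast
        then show ?thesis using le_funD[OF le, of y] by (simp add: at_g rhs_at_g)
      qed (simp add: off_g)
    qed
  qed
qed

definition exponent_of_list :: "'a list \<Rightarrow> ('a \<Rightarrow>\<^sub>0 nat)" where
  "exponent_of_list xs = sum_list (map (\<lambda>x. Poly_Mapping.single x 1) xs)"

lemma exponent_of_list_simps [simp]:
  "exponent_of_list [] = 0"
  "exponent_of_list (x # xs) = Poly_Mapping.single x 1 + exponent_of_list xs"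
  by (simp_all add: exponent_of_list_def)

lemma lookup_exponent_of_list: "Poly_Mapping.lookup (exponent_of_list xs) x = count_list xs x"
  by (induction xs) (simp_all add: lookup_add lookup_single)

lemma keys_exponent_of_list [simp]: "Poly_Mapping.keys (exponent_of_list xs) = set xs"
  by (auto simp: in_keys_iff lookup_exponent_of_list count_list_0_iff)

lemma set_subset_keys_if_exponent_le:
  assumes "Poly_Mapping.lookup (exponent_of_list xs) \<le> Poly_Mapping.lookup a"
  shows "set xs \<subseteq> Poly_Mapping.keys a"
proof
  fix x assume "x \<in> set xs"
  then have "0 < Poly_Mapping.lookup (exponent_of_list xs) x"
    by (simp add: lookup_exponent_of_list) (metis count_list_0_iff gr0I)
  also have "\<dots> \<le> Poly_Mapping.lookup a x"
    using assms by (rule le_funD)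
  finally show "x \<in> Poly_Mapping.keys a"
    by (simp add: in_keys_iff)
qed

lemma pushforward_exponent_of_list: "pushforward g (exponent_of_list xs) = exponent_of_list (map g xs)"
  by (induction xs) (simp_all add: pushforward_add)

lemma lift_exponent_of_list:
  fixes a :: "'a \<Rightarrow>\<^sub>0 nat"
  assumes "Poly_Mapping.lookup (exponent_of_list ts) \<le> Poly_Mapping.lookup (pushforward f a)"
  shows "\<exists>ps. map f ps = ts \<and> Poly_Mapping.lookup (exponent_of_list ps) \<le> Poly_Mapping.lookup a"
  using assms
proof (induction ts arbitrary: a)
  case Nil
  then show ?case by (intro exI[of _ "[]"]) (simp add: le_fun_def)
next
  case (Cons t ts)
  have "Poly_Mapping.lookup (pushforward f a) t \<noteq> 0"
    using le_funD[OF Cons.prems, of t] by (simp add: lookup_add)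
  then obtain x where "x \<in> Poly_Mapping.keys a" "(if f x = t then Poly_Mapping.lookup a x else 0) \<noteq> 0"
    unfolding lookup_pushforward by (rule sum.not_neutral_contains_not_neutral)
  then have x: "x \<in> Poly_Mapping.keys a" "f x = t"
    by (simp_all split: if_splits)
  define a' where "a' = a - Poly_Mapping.single x 1"
  have a: "a = a' + Poly_Mapping.single x 1"
    using x(1) unfolding a'_def
    by (intro lookup_le_diff_add[symmetric]) (auto simp: le_fun_def lookup_single when_def in_keys_iff)
  have "Poly_Mapping.lookup (exponent_of_list ts) \<le> Poly_Mapping.lookup (pushforward f a')"
    using Cons.prems unfolding a by (simp add: pushforward_add x(2) le_fun_def lookup_add)
  then obtain ps where "map f ps = ts" "Poly_Mapping.lookup (exponent_of_list ps) \<le> Poly_Mapping.lookup a'"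
    using Cons.IH by blast
  then show ?case
    using x(2) unfolding a by (intro exI[of _ "x # ps"]) (auto simp: le_fun_def lookup_add)
qed

section \<open>Substitution homomorphisms\<close>

definition msubst_monom ::
    "('v \<Rightarrow> ('w, 'k::comm_ring_1) mpoly) \<Rightarrow> ('v \<Rightarrow>\<^sub>0 nat) \<Rightarrow> ('w, 'k) mpoly" where
  "msubst_monom \<sigma> a = (\<Prod>v\<in>Poly_Mapping.keys a. \<sigma> v ^ Poly_Mapping.lookup a v)"

lemma msubst_monom_superset:
  assumes "finite S" "Poly_Mapping.keys a \<subseteq> S"
  shows "msubst_monom \<sigma> a = (\<Prod>v\<in>S. \<sigma> v ^ Poly_Mapping.lookup a v)"
  unfolding msubst_monom_def
  by (rule prod.mono_neutral_left) (use assms in \<open>auto simp: in_keys_iff\<close>)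

lemma msubst_monom_add: "msubst_monom \<sigma> (a + b) = msubst_monom \<sigma> a * msubst_monom \<sigma> b"
proof -
  let ?S = "Poly_Mapping.keys a \<union> Poly_Mapping.keys b"
  have "msubst_monom \<sigma> (a + b)
      = (\<Prod>v\<in>?S. \<sigma> v ^ Poly_Mapping.lookup a v * \<sigma> v ^ Poly_Mapping.lookup b v)"
    by (subst msubst_monom_superset[of ?S]) (auto simp: keys_add lookup_add power_add)
  also have "\<dots> = msubst_monom \<sigma> a * msubst_monom \<sigma> b"
    by (simp add: prod.distrib msubst_monom_superset[of ?S])
  finally show ?thesis .
qed

lemma msubst_single: "msubst \<sigma> (Poly_Mapping.single a c) = mconst c * msubst_monom \<sigma> a"
  by (simp add: msubst_def msubst_monom_def mconst_def)

lemma msubst_superset: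
  assumes "finite S" "Poly_Mapping.keys p \<subseteq> S"
  shows "msubst \<sigma> p = (\<Sum>a\<in>S. mconst (Poly_Mapping.lookup p a) * msubst_monom \<sigma> a)"
  unfolding msubst_def msubst_monom_def
  by (rule sum.mono_neutral_left) (use assms in \<open>auto simp: in_keys_iff mconst_def\<close>)

lemma msubst_add: "msubst \<sigma> (p + q) = msubst \<sigma> p + msubst \<sigma> q"
proof -
  let ?S = "Poly_Mapping.keys p \<union> Poly_Mapping.keys q"
  show ?thesis
    by (simp add: msubst_superset[of ?S] keys_add lookup_add mconst_def single_add
        distrib_right sum.distrib)
qed

lemma msubst_0 [simp]: "msubst \<sigma> 0 = 0"
  by (simp add: msubst_def)

lemma msubst_sum: "msubst \<sigma> (sum f A) = (\<Sum>a\<in>A. msubst \<sigma> (f a))"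
  by (induction A rule: infinite_finite_induct) (auto simp: msubst_add)

lemma msubst_mult: "msubst \<sigma> (p * q) = msubst \<sigma> p * msubst \<sigma> q"
proof -
  let ?A = "Poly_Mapping.keys p" and ?B = "Poly_Mapping.keys q"
  have "p * q = (\<Sum>a\<in>?A. \<Sum>b\<in>?B.
      Poly_Mapping.single (a + b) (Poly_Mapping.lookup p a * Poly_Mapping.lookup q b))"
    by (subst (1 2) poly_mapping_sum_single) (simp add: sum_product mult_single)
  then have "msubst \<sigma> (p * q) = (\<Sum>a\<in>?A. \<Sum>b\<in>?B.
      (mconst (Poly_Mapping.lookup p a) * msubst_monom \<sigma> a)
      * (mconst (Poly_Mapping.lookup q b) * msubst_monom \<sigma> b))"
    by (simp add: msubst_sum msubst_single msubst_monom_add mconst_def mult_single ac_simps)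
  also have "\<dots> = msubst \<sigma> p * msubst \<sigma> q"
    by (simp add: msubst_def msubst_monom_def sum_product)
  finally show ?thesis .
qed

lemma prod_list_mvar:
  "prod_list (map mvar xs) = (Poly_Mapping.single (exponent_of_list xs) 1 :: ('v, 'k::comm_ring_1) mpoly)"
  by (induction xs) (simp_all add: mvar_def mult_single)

lemma mvar_power: "mvar v ^ n = (Poly_Mapping.single (Poly_Mapping.single v n) 1 :: ('v, 'k::comm_ring_1) mpoly)"
  by (induction n) (simp_all add: mvar_def mult_single flip: single_add)

lemma prod_single_one:
  "(\<Prod>x\<in>S. Poly_Mapping.single (e x) (1::'k::comm_ring_1)) = Poly_Mapping.single (\<Sum>x\<in>S. e x) 1"
  by (induction S rule: infinite_finite_induct) (simp_all add: mult_single)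

section \<open>Polynomials in a set of variables and generated ideals\<close>

lemma polys_in_iff: "p \<in> polys_in V \<longleftrightarrow> (\<forall>a\<in>Poly_Mapping.keys p. Poly_Mapping.keys a \<subseteq> V)"
  by (auto simp: polys_in_def mvars_def)

lemma polys_in_0 [simp]: "0 \<in> polys_in V"
  by (simp add: polys_in_iff)

lemma polys_in_single: "Poly_Mapping.keys a \<subseteq> V \<Longrightarrow> Poly_Mapping.single a c \<in> polys_in V"
  by (simp add: polys_in_iff)

lemma polys_in_add: "p \<in> polys_in V \<Longrightarrow> q \<in> polys_in V \<Longrightarrow> p + q \<in> polys_in V"
  using keys_add[of p q] by (auto simp: polys_in_iff)

lemma polys_in_mult:
  fixes p q :: "('v, 'k::comm_ring_1) mpoly"
  assumes "p \<in> polys_in V" "q \<in> polys_in V"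
  shows "p * q \<in> polys_in V"
  unfolding polys_in_iff
proof
  fix m assume "m \<in> Poly_Mapping.keys (p * q)"
  then obtain a b where "m = a + b" "a \<in> Poly_Mapping.keys p" "b \<in> Poly_Mapping.keys q"
    using keys_mult by blast
  then show "Poly_Mapping.keys m \<subseteq> V"
    using assms keys_add[of a b] unfolding polys_in_iff by blast
qed

lemma polys_in_sum: "(\<And>a. a \<in> A \<Longrightarrow> f a \<in> polys_in V) \<Longrightarrow> sum f A \<in> polys_in V"
  by (induction A rule: infinite_finite_induct) (auto intro: polys_in_add)

lemma ideal_gen_0: "0 \<in> ideal_gen S G"
  unfolding ideal_gen_def by (rule CollectI, rule exI[of _ "{}"]) auto

lemma ideal_gen_gen: "c \<in> S \<Longrightarrow> g \<in> G \<Longrightarrow> c * g \<in> ideal_gen S G"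
  unfolding ideal_gen_def by (rule CollectI, rule exI[of _ "{g}"], rule exI[of _ "\<lambda>_. c"]) auto

lemma ideal_gen_add:
  assumes S: "0 \<in> S" "\<And>a b. a \<in> S \<Longrightarrow> b \<in> S \<Longrightarrow> a + b \<in> S"
    and "x \<in> ideal_gen S G" "y \<in> ideal_gen S G"
  shows "x + y \<in> ideal_gen S G"
proof -
  obtain F c where F: "x = (\<Sum>g\<in>F. c g * g)" "finite F" "F \<subseteq> G" "\<forall>g\<in>F. c g \<in> S"
    using assms(3) unfolding ideal_gen_def by blast
  obtain F' c' where F': "y = (\<Sum>g\<in>F'. c' g * g)" "finite F'" "F' \<subseteq> G" "\<forall>g\<in>F'. c' g \<in> S"
    using assms(4) unfolding ideal_gen_def by blast
  define d where "d g = (if g \<in> F then c g else 0)" for g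
  define d' where "d' g = (if g \<in> F' then c' g else 0)" for g
  have "x = (\<Sum>g\<in>F \<union> F'. d g * g)" "y = (\<Sum>g\<in>F \<union> F'. d' g * g)"
    unfolding F(1) F'(1)
    by (rule sum.mono_neutral_cong_left; use F(2) F'(2) in \<open>auto simp: d_def d'_def\<close>)+
  then have "x + y = (\<Sum>g\<in>F \<union> F'. (d g + d' g) * g)"
    by (simp add: distrib_right sum.distrib)
  moreover have "\<forall>g\<in>F \<union> F'. d g + d' g \<in> S"
    using F(4) F'(4) S by (auto simp: d_def d'_def)
  ultimately show ?thesis
    unfolding ideal_gen_def using F(2,3) F'(2,3)
    by (intro CollectI exI[of _ "F \<union> F'"] exI[of _ "\<lambda>g. d g + d' g"]) auto
qed

lemma ideal_gen_sum:
  assumes "0 \<in> S" "\<And>a b. a \<in> S \<Longrightarrow> b \<in> S \<Longrightarrow> a + b \<in> S"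
    and "\<And>a. a \<in> A \<Longrightarrow> f a \<in> ideal_gen S G"
  shows "sum f A \<in> ideal_gen S G"
  using assms(3)
  by (induction A rule: infinite_finite_induct) (auto intro: ideal_gen_add[OF assms(1,2)] ideal_gen_0)

lemma ideal_gen_singleton_dvd: "x \<in> ideal_gen S {g} \<Longrightarrow> g dvd x"
  unfolding ideal_gen_def by (auto simp: subset_singleton_iff)

lemma in_ideal_gen_monomial:
  fixes q :: "('v, 'k::comm_ring_1) mpoly"
  assumes "q \<in> polys_in V"
    and "\<And>k. k \<in> Poly_Mapping.keys q \<Longrightarrow> Poly_Mapping.lookup \<mu> \<le> Poly_Mapping.lookup k"
  shows "q \<in> ideal_gen (polys_in V) {Poly_Mapping.single \<mu> 1}"
proof -
  define c where "c = (\<Sum>k\<in>Poly_Mapping.keys q. Poly_Mapping.single (k - \<mu>) (Poly_Mapping.lookup q k))"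
  have "c * Poly_Mapping.single \<mu> 1
      = (\<Sum>k\<in>Poly_Mapping.keys q. Poly_Mapping.single ((k - \<mu>) + \<mu>) (Poly_Mapping.lookup q k))"
    by (simp add: c_def sum_distrib_right mult_single)
  also have "\<dots> = q"
    using assms(2) by (simp add: lookup_le_diff_add flip: poly_mapping_sum_single)
  finally have "q = c * Poly_Mapping.single \<mu> 1" ..
  moreover have "c \<in> polys_in V"
    unfolding c_def
    by (intro polys_in_sum polys_in_single) (meson assms(1) keys_diff_subset polys_in_iff subset_trans)
  ultimately show ?thesis
    by (simp add: ideal_gen_gen)
qed

lemma monomial_dvd_iff:
  fixes q :: "('v, 'k::comm_ring_1) mpoly"
  shows "Poly_Mapping.single \<mu> 1 dvd q \<longleftrightarrow>
    (\<forall>k\<in>Poly_Mapping.keys q. Poly_Mapping.lookup \<mu> \<le> Poly_Mapping.lookup k)"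
proof
  assume "Poly_Mapping.single \<mu> 1 dvd q"
  then obtain c where "q = Poly_Mapping.single \<mu> 1 * c" ..
  then show "\<forall>k\<in>Poly_Mapping.keys q. Poly_Mapping.lookup \<mu> \<le> Poly_Mapping.lookup k"
    using keys_mult[of "Poly_Mapping.single \<mu> 1" c]
    by (auto simp: lookup_add le_fun_def split: if_splits)
next
  assume "\<forall>k\<in>Poly_Mapping.keys q. Poly_Mapping.lookup \<mu> \<le> Poly_Mapping.lookup k"
  then have "q \<in> ideal_gen (polys_in UNIV) {Poly_Mapping.single \<mu> 1}"
    by (intro in_ideal_gen_monomial) (auto simp: polys_in_iff)
  then show "Poly_Mapping.single \<mu> 1 dvd q"
    by (rule ideal_gen_singleton_dvd)
qed

section \<open>Preimages of monomial ideals under monomial maps\<close>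

locale monomial_map =
  fixes \<sigma> :: "'v \<Rightarrow> ('w, 'k::comm_ring_1) mpoly"
    and \<Phi> :: "('v \<Rightarrow>\<^sub>0 nat) \<Rightarrow> ('w \<Rightarrow>\<^sub>0 nat)"
    and U :: "'v set" and V :: "'w set"
  assumes msubst_single_eq:
      "Poly_Mapping.keys a \<subseteq> U \<Longrightarrow>
        msubst \<sigma> (Poly_Mapping.single a c) = Poly_Mapping.single (\<Phi> a) c"
    and keys_image_subset: "Poly_Mapping.keys a \<subseteq> U \<Longrightarrow> Poly_Mapping.keys (\<Phi> a) \<subseteq> V"
begin

lemma keys_msubst_subset:
  assumes "p \<in> polys_in U"
  shows "Poly_Mapping.keys (msubst \<sigma> p) \<subseteq> \<Phi> ` Poly_Mapping.keys p"
proof -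
  have "msubst \<sigma> p = (\<Sum>a\<in>Poly_Mapping.keys p. msubst \<sigma> (Poly_Mapping.single a (Poly_Mapping.lookup p a)))"
    by (subst poly_mapping_sum_single) (simp add: msubst_sum)
  also have "\<dots> = (\<Sum>a\<in>Poly_Mapping.keys p. Poly_Mapping.single (\<Phi> a) (Poly_Mapping.lookup p a))"
    using assms by (intro sum.cong) (auto simp: msubst_single_eq polys_in_iff)
  finally show ?thesis
    using keys_sum[of "\<lambda>a. Poly_Mapping.single (\<Phi> a) (Poly_Mapping.lookup p a)"] by auto
qed

lemma msubst_in_polys_in: "p \<in> polys_in U \<Longrightarrow> msubst \<sigma> p \<in> polys_in V"
  using keys_msubst_subset keys_image_subset by (fastforce simp: polys_in_iff)

lemma generated_ideal_image_dvd:
  assumes gens: "\<And>b. b \<in> M \<Longrightarrow>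
      Poly_Mapping.keys b \<subseteq> U \<and> Poly_Mapping.lookup \<mu> \<le> Poly_Mapping.lookup (\<Phi> b)"
    and x: "x \<in> ideal_gen (polys_in U) ((\<lambda>b. Poly_Mapping.single b 1) ` M)"
  shows "x \<in> polys_in U \<and> Poly_Mapping.single \<mu> 1 dvd msubst \<sigma> x"
proof -
  obtain F c where F: "x = (\<Sum>g\<in>F. c g * g)" "F \<subseteq> (\<lambda>b. Poly_Mapping.single b 1) ` M"
    "\<forall>g\<in>F. c g \<in> polys_in U"
    using x unfolding ideal_gen_def by blast
  have "c g * g \<in> polys_in U \<and> Poly_Mapping.single \<mu> 1 dvd msubst \<sigma> (c g * g)" if "g \<in> F" for g
  proof -
    obtain b where b: "g = Poly_Mapping.single b 1" "b \<in> M"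
      using F(2) \<open>g \<in> F\<close> by blast
    have "Poly_Mapping.single \<mu> 1 dvd (Poly_Mapping.single (\<Phi> b) 1 :: ('w, 'k) mpoly)"
      using gens[OF b(2)] by (simp add: monomial_dvd_iff)
    then show ?thesis
      using gens[OF b(2)] F(3) \<open>g \<in> F\<close>
      by (simp add: b(1) msubst_mult msubst_single_eq polys_in_mult polys_in_single)
  qed
  then show ?thesis
    unfolding F(1) msubst_sum by (auto intro: polys_in_sum dvd_sum)
qed

lemma divisible_terms_in_generated_ideal:
  assumes cover: "\<And>a. Poly_Mapping.keys a \<subseteq> U \<Longrightarrow>
      Poly_Mapping.lookup \<mu> \<le> Poly_Mapping.lookup (\<Phi> a) \<Longrightarrow>
      \<exists>b\<in>M. Poly_Mapping.lookup b \<le> Poly_Mapping.lookup a"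
    and p: "p \<in> polys_in U"
  shows "(\<Sum>a\<in>{a \<in> Poly_Mapping.keys p. Poly_Mapping.lookup \<mu> \<le> Poly_Mapping.lookup (\<Phi> a)}.
      Poly_Mapping.single a (Poly_Mapping.lookup p a))
    \<in> ideal_gen (polys_in U) ((\<lambda>b. Poly_Mapping.single b 1) ` M)"
proof (intro ideal_gen_sum polys_in_0 polys_in_add)
  fix a assume a: "a \<in> {a \<in> Poly_Mapping.keys p. Poly_Mapping.lookup \<mu> \<le> Poly_Mapping.lookup (\<Phi> a)}"
  then have a_U: "Poly_Mapping.keys a \<subseteq> U"
    using p by (simp add: polys_in_iff)
  then obtain b where b: "b \<in> M" "Poly_Mapping.lookup b \<le> Poly_Mapping.lookup a"
    using cover[OF a_U] a by auto
  then have "Poly_Mapping.single a (Poly_Mapping.lookup p a)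
      = Poly_Mapping.single (a - b) (Poly_Mapping.lookup p a) * Poly_Mapping.single b 1"
    by (simp add: mult_single lookup_le_diff_add)
  moreover have "Poly_Mapping.single (a - b) (Poly_Mapping.lookup p a) \<in> polys_in U"
    by (intro polys_in_single subset_trans[OF keys_diff_subset a_U])
  ultimately show "Poly_Mapping.single a (Poly_Mapping.lookup p a)
      \<in> ideal_gen (polys_in U) ((\<lambda>b. Poly_Mapping.single b 1) ` M)"
    using b(1) by (simp add: ideal_gen_gen)
qed

lemma msubst_eq_0_if_no_term_divisible:
  assumes "p \<in> polys_in U"
    and "\<forall>a\<in>Poly_Mapping.keys p. \<not> Poly_Mapping.lookup \<mu> \<le> Poly_Mapping.lookup (\<Phi> a)"
    and "Poly_Mapping.single \<mu> 1 dvd msubst \<sigma> p"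
  shows "msubst \<sigma> p = 0"
proof -
  have False if k: "k \<in> Poly_Mapping.keys (msubst \<sigma> p)" for k
  proof -
    obtain a where "a \<in> Poly_Mapping.keys p" "k = \<Phi> a"
      using k keys_msubst_subset[OF assms(1)] by blast
    moreover have "Poly_Mapping.lookup \<mu> \<le> Poly_Mapping.lookup k"
      using assms(3) k unfolding monomial_dvd_iff by blast
    ultimately show False
      using assms(2) by blast
  qed
  then show ?thesis
    by (metis ex_in_conv keys_eq_empty)
qed

lemma preimage_subset_generated:
  assumes gens: "\<And>b. b \<in> M \<Longrightarrow>
      Poly_Mapping.keys b \<subseteq> U \<and> Poly_Mapping.lookup \<mu> \<le> Poly_Mapping.lookup (\<Phi> b)"
    and cover: "\<And>a. Poly_Mapping.keys a \<subseteq> U \<Longrightarrow>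
      Poly_Mapping.lookup \<mu> \<le> Poly_Mapping.lookup (\<Phi> a) \<Longrightarrow>
      \<exists>b\<in>M. Poly_Mapping.lookup b \<le> Poly_Mapping.lookup a"
    and p: "p \<in> polys_in U" "Poly_Mapping.single \<mu> 1 dvd msubst \<sigma> p"
  shows "p \<in> set_plus_ideal (ideal_gen (polys_in U) ((\<lambda>b. Poly_Mapping.single b 1) ` M))
    {q \<in> polys_in U. msubst \<sigma> q = 0}"
proof -
  define h where "h = (\<Sum>a\<in>{a \<in> Poly_Mapping.keys p.
    Poly_Mapping.lookup \<mu> \<le> Poly_Mapping.lookup (\<Phi> a)}. Poly_Mapping.single a (Poly_Mapping.lookup p a))"
  define r where "r = (\<Sum>a\<in>{a \<in> Poly_Mapping.keys p.
    \<not> Poly_Mapping.lookup \<mu> \<le> Poly_Mapping.lookup (\<Phi> a)}. Poly_Mapping.single a (Poly_Mapping.lookup p a))"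
  have p_split: "p = h + r"
    unfolding h_def r_def by (rule poly_mapping_sum_single_filter)
  have keys_r: "Poly_Mapping.keys r
      \<subseteq> {a \<in> Poly_Mapping.keys p. \<not> Poly_Mapping.lookup \<mu> \<le> Poly_Mapping.lookup (\<Phi> a)}"
    unfolding r_def by (rule keys_sum_single_subset)
  then have r_in: "r \<in> polys_in U"
    using p(1) unfolding polys_in_iff by blast
  have h_in: "h \<in> ideal_gen (polys_in U) ((\<lambda>b. Poly_Mapping.single b 1) ` M)"
    unfolding h_def using cover p(1) by (rule divisible_terms_in_generated_ideal)
  have "Poly_Mapping.single \<mu> 1 dvd msubst \<sigma> h"
    by (rule conjunct2[OF generated_ideal_image_dvd[OF gens h_in]])
  then have "Poly_Mapping.single \<mu> 1 dvd msubst \<sigma> p - msubst \<sigma> h"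
    using p(2) by (rule dvd_diff[rotated])
  then have "Poly_Mapping.single \<mu> 1 dvd msubst \<sigma> r"
    by (simp add: p_split msubst_add)
  with r_in keys_r have "msubst \<sigma> r = 0"
    by (intro msubst_eq_0_if_no_term_divisible) blast+
  with p_split h_in r_in show ?thesis
    unfolding set_plus_ideal_def by blast
qed

theorem preimage_principal_monomial_ideal:
  assumes gens: "\<And>b. b \<in> M \<Longrightarrow>
      Poly_Mapping.keys b \<subseteq> U \<and> Poly_Mapping.lookup \<mu> \<le> Poly_Mapping.lookup (\<Phi> b)"
    and cover: "\<And>a. Poly_Mapping.keys a \<subseteq> U \<Longrightarrow>
      Poly_Mapping.lookup \<mu> \<le> Poly_Mapping.lookup (\<Phi> a) \<Longrightarrow>
      \<exists>b\<in>M. Poly_Mapping.lookup b \<le> Poly_Mapping.lookup a"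
  shows "{p \<in> polys_in U. msubst \<sigma> p \<in> ideal_gen (polys_in V) {Poly_Mapping.single \<mu> 1}}
    = set_plus_ideal (ideal_gen (polys_in U) ((\<lambda>b. Poly_Mapping.single b 1) ` M))
        {q \<in> polys_in U. msubst \<sigma> q = 0}"
proof (intro equalityI subsetI)
  fix p assume "p \<in> {p \<in> polys_in U. msubst \<sigma> p \<in> ideal_gen (polys_in V) {Poly_Mapping.single \<mu> 1}}"
  then show "p \<in> set_plus_ideal (ideal_gen (polys_in U) ((\<lambda>b. Poly_Mapping.single b 1) ` M))
      {q \<in> polys_in U. msubst \<sigma> q = 0}"
    by (auto intro: preimage_subset_generated[OF gens cover] ideal_gen_singleton_dvd)
next
  fix x assume "x \<in> set_plus_ideal (ideal_gen (polys_in U) ((\<lambda>b. Poly_Mapping.single b 1) ` M))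
      {q \<in> polys_in U. msubst \<sigma> q = 0}"
  then obtain a b where x: "x = a + b" "a \<in> ideal_gen (polys_in U) ((\<lambda>b. Poly_Mapping.single b 1) ` M)"
    "b \<in> polys_in U" "msubst \<sigma> b = 0"
    unfolding set_plus_ideal_def by blast
  then have "x \<in> polys_in U" "Poly_Mapping.single \<mu> 1 dvd msubst \<sigma> x"
    using generated_ideal_image_dvd[OF gens x(2)] by (simp_all add: msubst_add polys_in_add)
  then show "x \<in> {p \<in> polys_in U. msubst \<sigma> p \<in> ideal_gen (polys_in V) {Poly_Mapping.single \<mu> 1}}"
    by (simp add: in_ideal_gen_monomial msubst_in_polys_in monomial_dvd_iff)
qed

end

section \<open>The map phi_Q\<close>

definition phiQ_exponent :: "(nat \<times> nat \<Rightarrow>\<^sub>0 nat) \<Rightarrow> (nat + nat \<Rightarrow>\<^sub>0 nat)" where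
  "phiQ_exponent a = pushforward (Inl \<circ> fst) a + pushforward (Inr \<circ> snd) a"

lemma phiQ_single:
  "phiQ (Poly_Mapping.single a c) = (Poly_Mapping.single (phiQ_exponent a) c :: (nat + nat, 'k::comm_ring_1) mpoly)"
proof -
  have "msubst_monom (\<lambda>(j, k). mvar (Inl j) * mvar (Inr k)) a
      = (\<Prod>q\<in>Poly_Mapping.keys a. Poly_Mapping.single
          (Poly_Mapping.single (Inl (fst q)) (Poly_Mapping.lookup a q)
           + Poly_Mapping.single (Inr (snd q)) (Poly_Mapping.lookup a q)) (1::'k))"
    unfolding msubst_monom_def
    by (intro prod.cong) (auto simp: power_mult_distrib mvar_power mult_single)
  also have "\<dots> = Poly_Mapping.single (phiQ_exponent a) 1"
    by (simp add: prod_single_one phiQ_exponent_def pushforward_def sum.distrib)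
  finally show ?thesis
    by (simp add: phiQ_def msubst_single mconst_def mult_single)
qed

lemma monomial_map_phiQ:
  assumes "Q \<subseteq> {1..r} \<times> {1..s}"
  shows "monomial_map (\<lambda>(j, k). mvar (Inl j) * mvar (Inr k) :: (nat + nat, 'k::comm_ring_1) mpoly)
    phiQ_exponent Q (xy_vars r s)"
proof
  fix a :: "nat \<times> nat \<Rightarrow>\<^sub>0 nat" and c :: 'k
  show "msubst (\<lambda>(j, k). mvar (Inl j) * mvar (Inr k)) (Poly_Mapping.single a c)
      = Poly_Mapping.single (phiQ_exponent a) c"
    using phiQ_single by (simp add: phiQ_def)
  assume a: "Poly_Mapping.keys a \<subseteq> Q"
  have "Poly_Mapping.keys (phiQ_exponent a)
      \<subseteq> (Inl \<circ> fst) ` Poly_Mapping.keys a \<union> (Inr \<circ> snd) ` Poly_Mapping.keys a"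
    unfolding phiQ_exponent_def by (rule order_trans[OF keys_add]) (intro Un_mono keys_pushforward_subset)
  also have "\<dots> \<subseteq> xy_vars r s"
    using assms a unfolding xy_vars_def by force
  finally show "Poly_Mapping.keys (phiQ_exponent a) \<subseteq> xy_vars r s" .
qed

lemma phiQ_preimage_monomial:
  assumes Q: "Q \<subseteq> {1..r} \<times> {1..s}" and g: "inj g" "range g \<inter> range h = {}"
    and split: "\<And>a. phiQ_exponent a = pushforward (g \<circ> f) a + pushforward (h \<circ> f') a"
  shows "phiQ_preimage Q
      (ideal_gen (polys_in (xy_vars r s)) {Poly_Mapping.single (pushforward g (exponent_of_list ts)) 1})
    = set_plus_ideal
        (ideal_gen (polys_in Q)
          ((\<lambda>b. Poly_Mapping.single b 1) ` exponent_of_list ` {ps. map f ps = ts \<and> set ps \<subseteq> Q}))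
        (IQ Q :: (nat \<times> nat, 'k::comm_ring_1) mpoly set)"
proof -
  interpret monomial_map "\<lambda>(j, k). mvar (Inl j) * mvar (Inr k) :: (nat + nat, 'k) mpoly"
    phiQ_exponent Q "xy_vars r s"
    using Q by (rule monomial_map_phiQ)
  show ?thesis
    unfolding phiQ_preimage_def IQ_def phiQ_def
  proof (rule preimage_principal_monomial_ideal)
    fix b assume "b \<in> exponent_of_list ` {ps. map f ps = ts \<and> set ps \<subseteq> Q}"
    then obtain ps where "b = exponent_of_list ps" "map f ps = ts" "set ps \<subseteq> Q"
      by blast
    then show "Poly_Mapping.keys b \<subseteq> Q \<and>
        Poly_Mapping.lookup (pushforward g (exponent_of_list ts)) \<le> Poly_Mapping.lookup (phiQ_exponent b)"
      by (simp add: split lookup_le_pushforward_iff[OF g]) (simp add: pushforward_exponent_of_list)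
  next
    fix a assume a: "Poly_Mapping.keys a \<subseteq> Q"
      "Poly_Mapping.lookup (pushforward g (exponent_of_list ts)) \<le> Poly_Mapping.lookup (phiQ_exponent a)"
    then have "Poly_Mapping.lookup (exponent_of_list ts) \<le> Poly_Mapping.lookup (pushforward f a)"
      by (simp add: split lookup_le_pushforward_iff[OF g])
    then obtain ps where ps: "map f ps = ts" "Poly_Mapping.lookup (exponent_of_list ps) \<le> Poly_Mapping.lookup a"
      using lift_exponent_of_list by blast
    then have "set ps \<subseteq> Poly_Mapping.keys a"
      by (intro set_subset_keys_if_exponent_le)
    then show "\<exists>b\<in>exponent_of_list ` {ps. map f ps = ts \<and> set ps \<subseteq> Q}.
        Poly_Mapping.lookup b \<le> Poly_Mapping.lookup a"
      using a(1) ps by blast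
  qed
qed

lemma zip_image_eq_lists_with_map_fst:
  assumes "Q \<subseteq> A \<times> B"
  shows "zip xs ` {ys. length ys = length xs \<and> set ys \<subseteq> B \<and> (\<forall>l < length xs. (xs ! l, ys ! l) \<in> Q)}
    = {ps. map fst ps = xs \<and> set ps \<subseteq> Q}" (is "zip xs ` ?Y = ?P")
proof (intro equalityI subsetI)
  fix ps assume "ps \<in> ?P"
  then show "ps \<in> zip xs ` ?Y"
    using assms by (auto simp flip: zip_map_fst_snd intro!: image_eqI[of _ _ "map snd ps"]) blast
qed (auto simp: set_zip)

lemma zip_image_eq_lists_with_map_snd:
  assumes "Q \<subseteq> A \<times> B"
  shows "(\<lambda>xs. zip xs ys) ` {xs. length xs = length ys \<and> set xs \<subseteq> A \<and> (\<forall>l < length ys. (xs ! l, ys ! l) \<in> Q)}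
    = {ps. map snd ps = ys \<and> set ps \<subseteq> Q}" (is "?zip ` ?X = ?P")
proof (intro equalityI subsetI)
  fix ps assume "ps \<in> ?P"
  then show "ps \<in> ?zip ` ?X"
    using assms by (auto simp flip: zip_map_fst_snd intro!: image_eqI[of _ _ "map fst ps"]) blast
qed (auto simp: set_zip)

theorem lemma3p5:
  fixes r s :: nat and Q :: "(nat \<times> nat) set"
    and js ks :: "nat list"
  assumes "r > 0" and "s > 0"
    and "Q \<subseteq> {1..r} \<times> {1..s}"
  shows
    "(set js \<subseteq> {1..r} \<longrightarrow>
      phiQ_preimage Q
        (ideal_gen (polys_in (xy_vars r s)) {prod_list (map (\<lambda>j. mvar (Inl j)) js)})
      = set_plus_ideal
          (ideal_gen (polys_in Q)
             {prod_list (map (\<lambda>(j,k). mvar (j,k)) (zip js ks')) | ks'.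
                length ks' = length js \<and> set ks' \<subseteq> {1..s} \<and>
                (\<forall>l < length js. (js ! l, ks' ! l) \<in> Q)})
          (IQ Q :: (nat \<times> nat, 'k::field) mpoly set))
   \<and>
    (set ks \<subseteq> {1..s} \<longrightarrow>
      phiQ_preimage Q
        (ideal_gen (polys_in (xy_vars r s)) {prod_list (map (\<lambda>k. mvar (Inr k)) ks)})
      = set_plus_ideal
          (ideal_gen (polys_in Q)
             {prod_list (map (\<lambda>(j,k). mvar (j,k)) (zip js' ks)) | js'.
                length js' = length ks \<and> set js' \<subseteq> {1..r} \<and>
                (\<forall>l < length ks. (js' ! l, ks ! l) \<in> Q)})
          (IQ Q :: (nat \<times> nat, 'k::field) mpoly set))"
proof -
  have monomial: "prod_list (map (\<lambda>x. mvar (g x)) xs)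
      = (Poly_Mapping.single (pushforward g (exponent_of_list xs)) 1 :: (nat + nat, 'k) mpoly)"
    for g :: "nat \<Rightarrow> nat + nat" and xs
    using prod_list_mvar[of "map g xs"] by (simp add: pushforward_exponent_of_list comp_def)
  have generators: "{prod_list (map (\<lambda>(j, k). mvar (j, k)) (z x)) | x. P x}
      = (\<lambda>b. Poly_Mapping.single b 1 :: (nat \<times> nat, 'k) mpoly) ` exponent_of_list ` z ` {x. P x}"
    for z :: "nat list \<Rightarrow> (nat \<times> nat) list" and P
    by (auto simp: case_prod_eta prod_list_mvar)
  have disjoint: "range Inl \<inter> range Inr = {}" "range Inr \<inter> range Inl = {}"
    by auto
  have phiQ_exponent_swap: "phiQ_exponent a = pushforward (Inr \<circ> snd) a + pushforward (Inl \<circ> fst) a" for a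
    by (simp add: phiQ_exponent_def add.commute)
  show ?thesis
    unfolding monomial generators zip_image_eq_lists_with_map_fst[OF assms(3)]
      zip_image_eq_lists_with_map_snd[OF assms(3)]
    using phiQ_preimage_monomial[where 'k='k, OF assms(3) inj_Inl disjoint(1) phiQ_exponent_def, of js]
      phiQ_preimage_monomial[where 'k='k, OF assms(3) inj_Inr disjoint(2) phiQ_exponent_swap, of ks]
    by simp
qed

end
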